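(* Let $S$ be a closed type of system $\mathcal{F}$ which is $\forall^+$ (a type with positive quantifiers) and does not contain the type constant $O$. Then $S$ is an output type: for every normal $\lambda$-term $t$ and every term variable $\alpha$, if $\alpha : O \vdash_{\mathcal F} t : S$, then $\alpha \notin Fv(t)$.
   Context: $\lambda$-terms are those of the untyped $\lambda$-calculus; $(t)u$ denotes application, $Fv(t)$ the set of free variables of $t$, and a term is normal if it contains no $\beta$-redex. Types of system $\mathcal F$ are built from type variables and type constants (atomic types on which one cannot quantify; $O$ is such a constant) with the connectives $\rightarrow$ and $\forall$; only proper types are considered, i.e. in every subformula $\forall X A$ the variable $X$ occurs free in $A$. A type is closed if it has no free type variable. A context is $\Gamma = x_1:A_1,\dots,x_n:A_n$. The judgement $\Gamma \vdash_{\mathcal F} t : A$ is generated by: (ax) $\Gamma \vdash x_i : A_i$; ($\rightarrow_i$) from $\Gamma, x:B \vdash t : C$ infer $\Gamma \vdash \lambda x t : B \rightarrow C$; ($\rightarrow_e$) from $\Gamma \vdash u : B\rightarrow C$ and $\Gamma \vdash v : B$ infer $\Gamma \vdash (u)v : C$; ($\forall_i$) from $\Gamma \vdash t : A$ with $X$ not free in $\Gamma$ infer $\Gamma \vdash t : \forall X A$; ($\forall_e$) from $\Gamma \vdash t : \forall X A$ infer $\Gamma \vdash t : A[C/X]$ for any type $C$. The classes $\forall^+$ and $\forall^-$ are defined by: every type variable is both $\forall^+$ and $\forall^-$; if $A$ is $\forall^+$ (resp. $\forall^-$) and $B$ is $\forall^-$ (resp. $\forall^+$) then $B\rightarrow A$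 is $\forall^+$ (resp. $\forall^-$); if $A$ is $\forall^+$ and $X$ is free in $A$ then $\forall X A$ is $\forall^+$. *)

theory Defs
  imports Main
begin

type_synonym var = nat

datatype trm = Var var | App trm trm | Lam var trm

fun fv :: "trm \<Rightarrow> var set" where
  "fv (Var x) = {x}"
| "fv (App u v) = fv u \<union> fv v"
| "fv (Lam x t) = fv t - {x}"

fun is_lam :: "trm \<Rightarrow> bool" where
  "is_lam (Lam x t) = True"
| "is_lam _ = False"

fun normal :: "trm \<Rightarrow> bool" where
  "normal (Var x) = True"
| "normal (Lam x t) = normal t"
| "normal (App u v) = (normal u \<and> normal v \<and> \<not> is_lam u)"

section \<open>Types of system F (type variables as de Bruijn indices)\<close>

datatype ty = TVar nat | TCon string | Arr ty ty | All ty

definition O_ty :: ty where "O_ty = TCon ''O''"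

fun lift :: "nat \<Rightarrow> ty \<Rightarrow> ty" where
  "lift k (TVar i) = (if i < k then TVar i else TVar (Suc i))"
| "lift k (TCon c) = TCon c"
| "lift k (Arr A B) = Arr (lift k A) (lift k B)"
| "lift k (All A) = All (lift (Suc k) A)"

fun subst :: "nat \<Rightarrow> ty \<Rightarrow> ty \<Rightarrow> ty" where
  "subst k C (TVar i) = (if i < k then TVar i else if i = k then C else TVar (i - 1))"
| "subst k C (TCon c) = TCon c"
| "subst k C (Arr A B) = Arr (subst k C A) (subst k C B)"
| "subst k C (All A) = All (subst (Suc k) (lift 0 C) A)"

fun occ :: "nat \<Rightarrow> ty \<Rightarrow> bool" where
  "occ k (TVar i) = (i = k)"
| "occ k (TCon c) = False"
| "occ k (Arr A B) = (occ k A \<or> occ k B)"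
| "occ k (All A) = occ (Suc k) A"

fun closed_at :: "nat \<Rightarrow> ty \<Rightarrow> bool" where
  "closed_at k (TVar i) = (i < k)"
| "closed_at k (TCon c) = True"
| "closed_at k (Arr A B) = (closed_at k A \<and> closed_at k B)"
| "closed_at k (All A) = closed_at (Suc k) A"

definition closed_ty :: "ty \<Rightarrow> bool" where
  "closed_ty A = closed_at 0 A"

fun proper :: "ty \<Rightarrow> bool" where
  "proper (TVar i) = True"
| "proper (TCon c) = True"
| "proper (Arr A B) = (proper A \<and> proper B)"
| "proper (All A) = (occ 0 A \<and> proper A)"

fun has_con :: "string \<Rightarrow> ty \<Rightarrow> bool" where
  "has_con c (TVar i) = False"
| "has_con c (TCon d) = (c = d)"
| "has_con c (Arr A B) = (has_con c A \<or> has_con c B)"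
| "has_con c (All A) = has_con c A"

text \<open>The classes forall+ and forall-, following the paper's definition literally.\<close>
fun fpos :: "ty \<Rightarrow> bool" and fneg :: "ty \<Rightarrow> bool" where
  "fpos (TVar i) = True"
| "fneg (TVar i) = True"
| "fpos (TCon c) = False"
| "fneg (TCon c) = False"
| "fpos (Arr B A) = (fneg B \<and> fpos A)"
| "fneg (Arr B A) = (fpos B \<and> fneg A)"
| "fpos (All A) = (fpos A \<and> occ 0 A)"
| "fneg (All A) = False"

type_synonym ctx = "var \<Rightarrow> ty option"

inductive typing :: "ctx \<Rightarrow> trm \<Rightarrow> ty \<Rightarrow> bool" where
  ax: "\<Gamma> x = Some A \<Longrightarrow> typing \<Gamma> (Var x) A"
| arr_i: "proper B \<Longrightarrow> typing (\<Gamma>(x \<mapsto> B)) t C \<Longrightarrow> typing \<Gamma> (Lam x t) (Arr B C)"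
| arr_e: "typing \<Gamma> u (Arr B C) \<Longrightarrow> typing \<Gamma> v B \<Longrightarrow> typing \<Gamma> (App u v) C"
| all_i: "typing (map_option (lift 0) \<circ> \<Gamma>) t A \<Longrightarrow> occ 0 A \<Longrightarrow> typing \<Gamma> t (All A)"
| all_e: "typing \<Gamma> t (All A) \<Longrightarrow> proper C \<Longrightarrow> typing \<Gamma> t (subst 0 C A)"

definition output_type :: "ty \<Rightarrow> bool" where
  "output_type S = (\<forall>t \<alpha>. normal t \<longrightarrow> typing [\<alpha> \<mapsto> O_ty] t S \<longrightarrow> \<alpha> \<notin> fv t)"

end

theory Submission
  imports Defs
begin

text \<open>Call a type rigid if no \<open>\<forall>\<close> occurs along its spine of arrow codomains. A term whose
head variable has a rigid type B can only be typed by arrow elimination: \<open>\<forall>\<close>-elimination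
would need a \<open>\<forall>\<close> in the spine of B, and \<open>\<forall>\<close>-introduction of a proper type would need the
fresh type variable to occur in a codomain of the lifted B. So its type is a codomain of B.
In the context \<open>\<alpha> : O\<close> extended by negative assumptions every type is rigid; hence \<open>\<alpha>\<close> can only
head terms of type O, which is not positive, and the arguments of a head of negative type
have positive types. Induction on the normal term then keeps \<open>\<alpha>\<close> out of it.\<close>

text \<open>\<open>fpos\<close>/\<open>fneg\<close> without the occurrence condition, so that positivity of \<open>A[C/X]\<close> yields
positivity of \<open>\<forall>X A\<close> in the \<open>\<forall>\<close>-elimination case.\<close>
fun positive :: "ty \<Rightarrow> bool" and negative :: "ty \<Rightarrow> bool" where
  "positive (TVar i) = True"
| "negative (TVar i) = True"
| "positive (TCon c) = False"
| "negative (TCon c) = False"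
| "positive (Arr B A) = (negative B \<and> positive A)"
| "negative (Arr B A) = (positive B \<and> negative A)"
| "positive (All A) = positive A"
| "negative (All A) = False"

fun rigid :: "ty \<Rightarrow> bool" where
  "rigid (TVar i) = True"
| "rigid (TCon c) = True"
| "rigid (Arr B C) = rigid C"
| "rigid (All A) = False"

inductive result_of :: "ty \<Rightarrow> ty \<Rightarrow> bool" where
  result_self: "result_of B B"
| result_arr: "result_of B (Arr C A) \<Longrightarrow> result_of B A"

fun head_var :: "trm \<Rightarrow> var option" where
  "head_var (Var x) = Some x"
| "head_var (App u v) = head_var u"
| "head_var (Lam x t) = None"

definition O_neg_ctx :: "var \<Rightarrow> ctx \<Rightarrow> bool" where
  "O_neg_ctx a \<Gamma> \<longleftrightarrow> \<Gamma> a = Some O_ty \<and> (\<forall>y B. y \<noteq> a \<longrightarrow> \<Gamma> y = Some B \<longrightarrow> negative B)"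

lemma fpos_imp_positive: "(fpos A \<longrightarrow> positive A) \<and> (fneg A \<longrightarrow> negative A)"
  by (induction A) auto

lemma positive_lift: "(positive (lift k A) = positive A) \<and> (negative (lift k A) = negative A)"
  by (induction A arbitrary: k) auto

lemma positive_subst_imp: "(positive (subst k C A) \<longrightarrow> positive A) \<and> (negative (subst k C A) \<longrightarrow> negative A)"
  by (induction A arbitrary: k C) auto

lemma negative_imp_rigid: "negative A \<Longrightarrow> rigid A"
  by (induction A) auto

lemma rigid_lift: "rigid (lift k A) = rigid A"
  by (induction A arbitrary: k) auto

lemma not_occ_lift: "\<not> occ k (lift k A)"
  by (induction A arbitrary: k) auto

lemma result_of_rigid: "result_of B A \<Longrightarrow> rigid B \<Longrightarrow> rigid A"
  by (induction rule: result_of.induct) auto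

lemma result_of_negative: "result_of B A \<Longrightarrow> negative B \<Longrightarrow> negative A"
  by (induction rule: result_of.induct) auto

lemma result_of_not_occ: "result_of B A \<Longrightarrow> \<not> occ k B \<Longrightarrow> \<not> occ k A"
  by (induction rule: result_of.induct) auto

lemma result_of_O: "result_of O_ty A \<Longrightarrow> A = O_ty"
  by (induction O_ty A rule: result_of.induct) (auto simp: O_ty_def)

lemma head_var_in_fv: "head_var t = Some h \<Longrightarrow> h \<in> fv t"
  by (induction t) auto

lemma normal_head_var: "normal u \<Longrightarrow> \<not> is_lam u \<Longrightarrow> \<exists>h. head_var u = Some h"
  by (induction u) auto

lemma typing_fv_in_dom: "typing \<Gamma> t A \<Longrightarrow> x \<in> fv t \<Longrightarrow> x \<in> dom \<Gamma>"
  by (induction arbitrary: x rule: typing.induct) (auto split: if_splits)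

lemma typing_rigid_head_result:
  assumes "typing \<Gamma> t A" "head_var t = Some h" "\<Gamma> h = Some B" "rigid B"
  shows "result_of B A"
  using assms
proof (induction arbitrary: h B rule: typing.induct)
  case (ax \<Gamma> x A)
  then show ?case by (simp add: result_self)
next
  case (arr_i B \<Gamma> x t C)
  then show ?case by simp
next
  case (arr_e \<Gamma> u B' C v)
  then show ?case by (auto intro: result_arr)
next
  case (all_i \<Gamma> t A)
  then have "result_of (lift 0 B) A"
    by (simp add: rigid_lift)
  then have "\<not> occ 0 A"
    using result_of_not_occ not_occ_lift by blast
  with all_i show ?case by simp
next
  case (all_e \<Gamma> t A C)
  then have "rigid (All A)"
    using result_of_rigid by blast
  then show ?case by simp
qed

lemma typing_rigid_head_not_All:
  assumes "typing \<Gamma> t (All A)" "head_var t = Some h" "\<Gamma> h = Some B" "rigid B"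
  shows False
proof -
  have "rigid (All A)"
    using typing_rigid_head_result[OF assms] assms(4) by (rule result_of_rigid)
  then show False by simp
qed

lemma typing_App_rigid_head:
  assumes "typing \<Gamma> (App u v) A" "head_var u = Some h" "\<Gamma> h = Some B" "rigid B"
  obtains B' where "typing \<Gamma> u (Arr B' A)" "typing \<Gamma> v B'"
  using assms(1)
proof cases
  case (all_i A')
  with assms show ?thesis
    using typing_rigid_head_not_All[of \<Gamma> "App u v" A' h B] by simp
next
  case (all_e A' C)
  with assms show ?thesis
    using typing_rigid_head_not_All[of \<Gamma> "App u v" A' h B] by simp
qed blast

lemma O_neg_ctx_rigid: "O_neg_ctx a \<Gamma> \<Longrightarrow> \<Gamma> h = Some B \<Longrightarrow> rigid B"
  unfolding O_neg_ctx_def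
  by (cases "h = a") (auto simp: O_ty_def negative_imp_rigid)

lemma O_neg_ctx_lift: "O_neg_ctx a \<Gamma> \<Longrightarrow> O_neg_ctx a (map_option (lift 0) \<circ> \<Gamma>)"
  unfolding O_neg_ctx_def using positive_lift by (auto simp: O_ty_def)

lemma typing_Lam_positive_inversion:
  assumes "typing \<Gamma> (Lam x s) A" "positive A" "O_neg_ctx a \<Gamma>" "x \<noteq> a"
  obtains \<Gamma>' A' where "O_neg_ctx a \<Gamma>'" "typing \<Gamma>' s A'" "positive A'"
proof -
  have "\<exists>\<Gamma>' A'. O_neg_ctx a \<Gamma>' \<and> typing \<Gamma>' s A' \<and> positive A'"
    using assms(1-3)
  proof (induction \<Gamma> "Lam x s" A rule: typing.induct)
    case (arr_i B \<Gamma> C)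
    then have "O_neg_ctx a (\<Gamma>(x \<mapsto> B))"
      using \<open>x \<noteq> a\<close> unfolding O_neg_ctx_def by auto
    with arr_i show ?case by auto
  next
    case (all_i \<Gamma> A)
    then show ?case using O_neg_ctx_lift by simp
  next
    case (all_e \<Gamma> A C)
    then show ?case using positive_subst_imp by simp
  qed
  then show ?thesis using that by blast
qed

lemma O_neg_ctx_head_arg:
  assumes "O_neg_ctx a \<Gamma>" "typing \<Gamma> u (Arr B' A)" "head_var u = Some h" "\<Gamma> h = Some B"
  shows "h \<noteq> a \<and> positive B'"
proof -
  have result: "result_of B (Arr B' A)"
    using typing_rigid_head_result assms O_neg_ctx_rigid by blast
  have "h \<noteq> a"
  proof
    assume "h = a"
    with assms(1,4) have "B = O_ty" by (simp add: O_neg_ctx_def)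
    with result show False using result_of_O[of "Arr B' A"] by (simp add: O_ty_def)
  qed
  with assms(1,4) have "negative B" by (simp add: O_neg_ctx_def)
  with result have "negative (Arr B' A)" by (rule result_of_negative)
  with \<open>h \<noteq> a\<close> show ?thesis by simp
qed

lemma O_neg_ctx_not_free:
  assumes "O_neg_ctx a \<Gamma>" "normal t" "typing \<Gamma> t A"
    and "positive A \<or> (\<exists>h. head_var t = Some h \<and> h \<noteq> a)"
  shows "a \<notin> fv t"
  using assms
proof (induction t arbitrary: \<Gamma> A)
  case (Var x)
  show ?case
  proof
    assume "a \<in> fv (Var x)"
    then have "x = a" by simp
    with Var.prems have "result_of O_ty A"
      by (intro typing_rigid_head_result[of \<Gamma> "Var x" A x]) (auto simp: O_neg_ctx_def O_ty_def)
    then have "A = O_ty" by (rule result_of_O)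
    with Var.prems \<open>x = a\<close> show False by (simp add: O_ty_def)
  qed
next
  case (Lam x s)
  show ?case
  proof (cases "x = a")
    case False
    from Lam.prems have "positive A" by simp
    with Lam.prems False obtain \<Gamma>' A' where "O_neg_ctx a \<Gamma>'" "typing \<Gamma>' s A'" "positive A'"
      by (auto elim: typing_Lam_positive_inversion)
    with Lam.IH Lam.prems(2) show ?thesis by auto
  qed simp
next
  case (App u v)
  then have normal_uv: "normal u" "normal v" "\<not> is_lam u" by auto
  then obtain h where h: "head_var u = Some h" using normal_head_var by blast
  then obtain B where B: "\<Gamma> h = Some B"
    using typing_fv_in_dom[OF App.prems(3)] head_var_in_fv by fastforce
  have "rigid B" using O_neg_ctx_rigid App.prems(1) B .
  with App.prems(3) h B obtain B' where u: "typing \<Gamma> u (Arr B' A)" and v: "typing \<Gamma> v B'"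
    by (rule typing_App_rigid_head)
  have "h \<noteq> a" "positive B'"
    using O_neg_ctx_head_arg[OF App.prems(1) u h B] by auto
  then have "a \<notin> fv v" "a \<notin> fv u"
    using App.IH[OF App.prems(1)] normal_uv u v h by auto
  then show ?case by simp
qed

theorem theorem2p1p7:
  assumes "closed_ty S" and "proper S" and "fpos S" and "\<not> has_con ''O'' S"
  shows "output_type S"
  unfolding output_type_def
proof (intro allI impI)
  fix t \<alpha>
  assume "normal t" "typing [\<alpha> \<mapsto> O_ty] t S"
  moreover have "O_neg_ctx \<alpha> [\<alpha> \<mapsto> O_ty]" by (simp add: O_neg_ctx_def)
  moreover have "positive S" using \<open>fpos S\<close> fpos_imp_positive by blast
  ultimately show "\<alpha> \<notin> fv t" using O_neg_ctx_not_free by blast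
qed

end
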